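(* Let $Y$ be a separable infinite-dimensional Hilbert space and let $U\in L(Y)$ be a unitary operator. For every $\varepsilon>0$ there exist a separable Hilbert space $X$, a diagonal operator $D_{\mathrm{diag}}\in L(X)$ with $\|D_{\mathrm{diag}}\|\le 1+\varepsilon$, and an isometry $V:Y\to X$ such that $V^*D_{\mathrm{diag}}V=U$.
   Context: An operator $D\in L(X)$ is diagonal if $X$ has an orthonormal basis consisting of eigenvectors of $D$. *)

theory Defs
  imports Complex_Main "HOL-Library.Countable_Set"
begin

text \<open>The inner product is conjugate-linear in the first and linear in the second argument.\<close>

record 'a hspace =
  hvecs  :: "'a set"
  hadd   :: "'a \<Rightarrow> 'a \<Rightarrow> 'a"
  hscale :: "complex \<Rightarrow> 'a \<Rightarrow> 'a"
  hzero  :: "'a"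
  hinner :: "'a \<Rightarrow> 'a \<Rightarrow> complex"

definition hsub :: "'a hspace \<Rightarrow> 'a \<Rightarrow> 'a \<Rightarrow> 'a" where
  "hsub H x y = hadd H x (hscale H (-1) y)"

definition hnorm :: "'a hspace \<Rightarrow> 'a \<Rightarrow> real" where
  "hnorm H x = sqrt (Re (hinner H x x))"

definition complex_inner_product_space :: "'a hspace \<Rightarrow> bool" where
  "complex_inner_product_space H \<longleftrightarrow>
     hzero H \<in> hvecs H \<and>
     (\<forall>x\<in>hvecs H. \<forall>y\<in>hvecs H. hadd H x y \<in> hvecs H) \<and>
     (\<forall>c. \<forall>x\<in>hvecs H. hscale H c x \<in> hvecs H) \<and>
     (\<forall>x\<in>hvecs H. \<forall>y\<in>hvecs H. \<forall>z\<in>hvecs H. hadd H (hadd H x y) z = hadd H x (hadd H y z)) \<and>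
     (\<forall>x\<in>hvecs H. \<forall>y\<in>hvecs H. hadd H x y = hadd H y x) \<and>
     (\<forall>x\<in>hvecs H. hadd H (hzero H) x = x) \<and>
     (\<forall>x\<in>hvecs H. \<exists>y\<in>hvecs H. hadd H x y = hzero H) \<and>
     (\<forall>a b. \<forall>x\<in>hvecs H. hscale H a (hscale H b x) = hscale H (a * b) x) \<and>
     (\<forall>x\<in>hvecs H. hscale H 1 x = x) \<and>
     (\<forall>a b. \<forall>x\<in>hvecs H. hscale H (a + b) x = hadd H (hscale H a x) (hscale H b x)) \<and>
     (\<forall>a. \<forall>x\<in>hvecs H. \<forall>y\<in>hvecs H. hscale H a (hadd H x y) = hadd H (hscale H a x) (hscale H a y)) \<and>
     (\<forall>x\<in>hvecs H. \<forall>y\<in>hvecs H. hinner H x y = cnj (hinner H y x)) \<and>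
     (\<forall>x\<in>hvecs H. \<forall>y\<in>hvecs H. \<forall>z\<in>hvecs H. hinner H x (hadd H y z) = hinner H x y + hinner H x z) \<and>
     (\<forall>c. \<forall>x\<in>hvecs H. \<forall>y\<in>hvecs H. hinner H x (hscale H c y) = c * hinner H x y) \<and>
     (\<forall>x\<in>hvecs H. 0 \<le> Re (hinner H x x)) \<and>
     (\<forall>x\<in>hvecs H. hinner H x x = 0 \<longrightarrow> x = hzero H)"

definition hilbert_space :: "'a hspace \<Rightarrow> bool" where
  "hilbert_space H \<longleftrightarrow> complex_inner_product_space H \<and>
     (\<forall>s. (\<forall>n. s n \<in> hvecs H) \<and>
          (\<forall>e>0. \<exists>N. \<forall>m\<ge>N. \<forall>n\<ge>N. hnorm H (hsub H (s m) (s n)) < e)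
        \<longrightarrow> (\<exists>x\<in>hvecs H. (\<lambda>n. hnorm H (hsub H (s n) x)) \<longlonglongrightarrow> 0))"

definition separable_hspace :: "'a hspace \<Rightarrow> bool" where
  "separable_hspace H \<longleftrightarrow> (\<exists>D \<subseteq> hvecs H. countable D \<and>
     (\<forall>x\<in>hvecs H. \<forall>e>0. \<exists>d\<in>D. hnorm H (hsub H x d) < e))"

fun hlsum :: "'a hspace \<Rightarrow> 'a list \<Rightarrow> 'a" where
  "hlsum H [] = hzero H"
| "hlsum H (x # xs) = hadd H x (hlsum H xs)"

definition finite_dimensional :: "'a hspace \<Rightarrow> bool" where
  "finite_dimensional H \<longleftrightarrow> (\<exists>fs. set fs \<subseteq> hvecs H \<and>
     (\<forall>x\<in>hvecs H. \<exists>cs. length cs = length fs \<and> x = hlsum H (map2 (hscale H) cs fs)))"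

definition infinite_dimensional :: "'a hspace \<Rightarrow> bool" where
  "infinite_dimensional H \<longleftrightarrow> \<not> finite_dimensional H"

definition bounded_linear_op :: "'a hspace \<Rightarrow> 'b hspace \<Rightarrow> ('a \<Rightarrow> 'b) \<Rightarrow> bool" where
  "bounded_linear_op H1 H2 T \<longleftrightarrow>
     (\<forall>x\<in>hvecs H1. T x \<in> hvecs H2) \<and>
     (\<forall>x\<in>hvecs H1. \<forall>y\<in>hvecs H1. T (hadd H1 x y) = hadd H2 (T x) (T y)) \<and>
     (\<forall>c. \<forall>x\<in>hvecs H1. T (hscale H1 c x) = hscale H2 c (T x)) \<and>
     (\<exists>K. \<forall>x\<in>hvecs H1. hnorm H2 (T x) \<le> K * hnorm H1 x)"

definition is_adjoint :: "'a hspace \<Rightarrow> 'b hspace \<Rightarrow> ('a \<Rightarrow> 'b) \<Rightarrow> ('b \<Rightarrow> 'a) \<Rightarrow> bool" where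
  "is_adjoint H1 H2 T S \<longleftrightarrow>
     (\<forall>y\<in>hvecs H2. S y \<in> hvecs H1) \<and>
     (\<forall>x\<in>hvecs H1. \<forall>y\<in>hvecs H2. hinner H2 (T x) y = hinner H1 x (S y))"

definition unitary :: "'a hspace \<Rightarrow> ('a \<Rightarrow> 'a) \<Rightarrow> bool" where
  "unitary H U \<longleftrightarrow> bounded_linear_op H H U \<and>
     (\<exists>S. is_adjoint H H U S \<and> (\<forall>x\<in>hvecs H. S (U x) = x \<and> U (S x) = x))"

definition isometry :: "'a hspace \<Rightarrow> 'b hspace \<Rightarrow> ('a \<Rightarrow> 'b) \<Rightarrow> bool" where
  "isometry H1 H2 V \<longleftrightarrow> bounded_linear_op H1 H2 V \<and>
     (\<forall>x\<in>hvecs H1. hnorm H2 (V x) = hnorm H1 x)"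

definition orthonormal_basis :: "'a hspace \<Rightarrow> 'a set \<Rightarrow> bool" where
  "orthonormal_basis H B \<longleftrightarrow> B \<subseteq> hvecs H \<and>
     (\<forall>b\<in>B. hinner H b b = 1) \<and>
     (\<forall>b\<in>B. \<forall>b'\<in>B. b \<noteq> b' \<longrightarrow> hinner H b b' = 0) \<and>
     (\<forall>x\<in>hvecs H. (\<forall>b\<in>B. hinner H b x = 0) \<longrightarrow> x = hzero H)"

definition eigenvector :: "'a hspace \<Rightarrow> ('a \<Rightarrow> 'a) \<Rightarrow> 'a \<Rightarrow> bool" where
  "eigenvector H D v \<longleftrightarrow> v \<in> hvecs H \<and> v \<noteq> hzero H \<and> (\<exists>c. D v = hscale H c v)"

definition diagonal :: "'a hspace \<Rightarrow> ('a \<Rightarrow> 'a) \<Rightarrow> bool" where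
  "diagonal H D \<longleftrightarrow> bounded_linear_op H H D \<and>
     (\<exists>B. orthonormal_basis H B \<and> (\<forall>b\<in>B. eigenvector H D b))"

end

(* Let N > M \<ge> 2 and \<omega> = e^(2\<pi>i/N). On X = Y^N let D multiply the j-th copy of Y by r \<omega>^j,
   where r = M / (M - 1), and let V y = (p_j(U) y)_{j<N} with p_j(z) = (NM)^(-1/2) \<Sum>_{i<M} \<omega>^(-ij) z^i.
   Since \<Sum>_{j<N} \<omega>^(jd) vanishes for 0 < |d| < N, the matrix entries of V* diag(\<omega>^(jk)) V are
   those of ((M - k) / M) U^k for k = 0, 1: V is an isometry and V* D V = U, while the norm of D is
   r \<le> 1 + \<epsilon> once M is large.
   Finally X is carried over to the type nat \<Rightarrow> complex along the injection x \<mapsto> (\<langle>d_n, x\<rangle>)_n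
   given by a dense sequence (d_n). *)

theory Submission
  imports Defs
begin

section \<open>Inner product spaces\<close>

text \<open>The assumptions unfold \<^const>\<open>complex_inner_product_space\<close>; explicit quantifiers fix the
  variable order where it differs from the order of occurrence, so that \<open>inner_prod_space_iff\<close> below is
  a mere unfolding.\<close>
locale inner_prod_space =
  fixes H :: "'a hspace"
  assumes zero_closed [simp]: "hzero H \<in> hvecs H"
    and add_closed [simp]: "x \<in> hvecs H \<Longrightarrow> y \<in> hvecs H \<Longrightarrow> hadd H x y \<in> hvecs H"
    and scale_closed [simp]: "\<And>c x. x \<in> hvecs H \<Longrightarrow> hscale H c x \<in> hvecs H"
    and add_assoc: "x \<in> hvecs H \<Longrightarrow> y \<in> hvecs H \<Longrightarrow> z \<in> hvecs H \<Longrightarrow>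
      hadd H (hadd H x y) z = hadd H x (hadd H y z)"
    and add_commute: "x \<in> hvecs H \<Longrightarrow> y \<in> hvecs H \<Longrightarrow> hadd H x y = hadd H y x"
    and zero_add [simp]: "x \<in> hvecs H \<Longrightarrow> hadd H (hzero H) x = x"
    and add_inverse_exists: "x \<in> hvecs H \<Longrightarrow> \<exists>y\<in>hvecs H. hadd H x y = hzero H"
    and scale_scale [simp]: "\<And>a b x. x \<in> hvecs H \<Longrightarrow> hscale H a (hscale H b x) = hscale H (a * b) x"
    and scale_one [simp]: "x \<in> hvecs H \<Longrightarrow> hscale H 1 x = x"
    and scale_left_distrib: "\<And>a b x. x \<in> hvecs H \<Longrightarrow> hscale H (a + b) x = hadd H (hscale H a x) (hscale H b x)"
    and scale_right_distrib: "\<And>a x y. x \<in> hvecs H \<Longrightarrow> y \<in> hvecs H \<Longrightarrow>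
      hscale H a (hadd H x y) = hadd H (hscale H a x) (hscale H a y)"
    and inner_commute: "x \<in> hvecs H \<Longrightarrow> y \<in> hvecs H \<Longrightarrow> hinner H x y = cnj (hinner H y x)"
    and inner_add_right [simp]: "x \<in> hvecs H \<Longrightarrow> y \<in> hvecs H \<Longrightarrow> z \<in> hvecs H \<Longrightarrow>
      hinner H x (hadd H y z) = hinner H x y + hinner H x z"
    and inner_scale_right [simp]: "\<And>c x y. x \<in> hvecs H \<Longrightarrow> y \<in> hvecs H \<Longrightarrow>
      hinner H x (hscale H c y) = c * hinner H x y"
    and inner_self_nonneg: "x \<in> hvecs H \<Longrightarrow> 0 \<le> Re (hinner H x x)"
    and inner_self_eq_zero: "x \<in> hvecs H \<Longrightarrow> hinner H x x = 0 \<Longrightarrow> x = hzero H"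

lemma inner_prod_space_iff: "inner_prod_space H \<longleftrightarrow> complex_inner_product_space H"
  unfolding inner_prod_space_def complex_inner_product_space_def by (simp add: Ball_def)

context inner_prod_space
begin

lemma inner_add_left [simp]:
  "x \<in> hvecs H \<Longrightarrow> y \<in> hvecs H \<Longrightarrow> z \<in> hvecs H \<Longrightarrow>
    hinner H (hadd H x y) z = hinner H x z + hinner H y z"
  by (metis add_closed complex_cnj_add inner_add_right inner_commute)

lemma inner_scale_left [simp]:
  "x \<in> hvecs H \<Longrightarrow> y \<in> hvecs H \<Longrightarrow> hinner H (hscale H c x) y = cnj c * hinner H x y"
  by (metis complex_cnj_mult complex_cnj_cnj inner_commute inner_scale_right scale_closed)

lemma inner_zero_right [simp]: "x \<in> hvecs H \<Longrightarrow> hinner H x (hzero H) = 0"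
  using inner_add_right[of x "hzero H" "hzero H"] by simp

lemma inner_zero_left [simp]: "x \<in> hvecs H \<Longrightarrow> hinner H (hzero H) x = 0"
  using inner_commute[of "hzero H" x] by simp

lemma inner_self_real: "x \<in> hvecs H \<Longrightarrow> hinner H x x = complex_of_real (Re (hinner H x x))"
proof -
  assume x: "x \<in> hvecs H"
  have "Im (hinner H x x) = 0" using arg_cong[OF inner_commute[OF x x], of Im] by simp
  then show ?thesis by (simp add: complex_eq_iff)
qed

lemma scale_zero [simp]: "x \<in> hvecs H \<Longrightarrow> hscale H 0 x = hzero H"
  by (rule inner_self_eq_zero) auto

lemma add_scale_minus_one: "x \<in> hvecs H \<Longrightarrow> hadd H x (hscale H (-1) x) = hzero H"
  using scale_left_distrib[of x 1 "-1"] by simp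

lemma hsub_closed [simp]: "x \<in> hvecs H \<Longrightarrow> y \<in> hvecs H \<Longrightarrow> hsub H x y \<in> hvecs H"
  by (simp add: hsub_def)

lemma inner_hsub_right [simp]:
  "x \<in> hvecs H \<Longrightarrow> y \<in> hvecs H \<Longrightarrow> z \<in> hvecs H \<Longrightarrow>
    hinner H x (hsub H y z) = hinner H x y - hinner H x z"
  by (simp add: hsub_def)

lemma inner_hsub_left [simp]:
  "x \<in> hvecs H \<Longrightarrow> y \<in> hvecs H \<Longrightarrow> z \<in> hvecs H \<Longrightarrow>
    hinner H (hsub H y z) x = hinner H y x - hinner H z x"
  by (simp add: hsub_def)

lemma add_zero [simp]: "x \<in> hvecs H \<Longrightarrow> hadd H x (hzero H) = x"
  using add_commute[of x "hzero H"] by simp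

lemma hsub_eq_zero_imp_eq:
  assumes x: "x \<in> hvecs H" and y: "y \<in> hvecs H" and "hsub H x y = hzero H"
  shows "x = y"
proof -
  have "y = hadd H (hsub H x y) y" using assms by simp
  also have "\<dots> = hadd H x (hadd H y (hscale H (-1) y))"
    using x y by (simp add: hsub_def add_assoc add_commute[of "hscale H (-1) y"])
  also have "\<dots> = x" using x y by (simp add: add_scale_minus_one)
  finally show ?thesis ..
qed

lemma hvecs_eqI:
  assumes a: "a \<in> hvecs H" and b: "b \<in> hvecs H"
    and inner_eq: "\<And>z. z \<in> hvecs H \<Longrightarrow> hinner H z a = hinner H z b"
  shows "a = b"
proof (rule hsub_eq_zero_imp_eq[OF a b], rule inner_self_eq_zero)
  show "hinner H (hsub H a b) (hsub H a b) = 0" using a b inner_eq[of "hsub H a b"] by simp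
qed (use a b in simp)

lemma scale_hzero [simp]: "hscale H c (hzero H) = hzero H"
  by (rule hvecs_eqI) auto

lemma hnorm_nonneg: "x \<in> hvecs H \<Longrightarrow> 0 \<le> hnorm H x"
  by (simp add: hnorm_def inner_self_nonneg)

lemma hnorm_square: "x \<in> hvecs H \<Longrightarrow> (hnorm H x)\<^sup>2 = Re (hinner H x x)"
  by (simp add: hnorm_def inner_self_nonneg)

lemma inner_self_eq_hnorm_square: "x \<in> hvecs H \<Longrightarrow> hinner H x x = complex_of_real ((hnorm H x)\<^sup>2)"
  using hnorm_square inner_self_real by simp

lemma hnorm_eq_zero: "x \<in> hvecs H \<Longrightarrow> hnorm H x = 0 \<Longrightarrow> x = hzero H"
  using inner_self_eq_hnorm_square[of x] inner_self_eq_zero[of x] by simp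

lemma hnorm_scale:
  assumes x: "x \<in> hvecs H"
  shows "hnorm H (hscale H c x) = cmod c * hnorm H x"
proof -
  have "hinner H (hscale H c x) (hscale H c x) = (c * cnj c) * hinner H x x"
    using x by (simp add: ac_simps)
  also have "\<dots> = complex_of_real ((cmod c * hnorm H x)\<^sup>2)"
    by (simp add: complex_norm_square[symmetric] inner_self_eq_hnorm_square[OF x] power_mult_distrib)
  finally have "(hnorm H (hscale H c x))\<^sup>2 = (cmod c * hnorm H x)\<^sup>2"
    using x by (simp add: hnorm_square)
  then show ?thesis using x by (simp add: hnorm_nonneg power2_eq_iff_nonneg)
qed

lemma hlsum_closed [simp]: "set xs \<subseteq> hvecs H \<Longrightarrow> hlsum H xs \<in> hvecs H"
  by (induction xs) auto

lemma inner_hlsum_right: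
  "z \<in> hvecs H \<Longrightarrow> set xs \<subseteq> hvecs H \<Longrightarrow> hinner H z (hlsum H xs) = (\<Sum>x\<leftarrow>xs. hinner H z x)"
  by (induction xs) auto

lemma inner_hlsum_left:
  "z \<in> hvecs H \<Longrightarrow> set xs \<subseteq> hvecs H \<Longrightarrow> hinner H (hlsum H xs) z = (\<Sum>x\<leftarrow>xs. hinner H x z)"
  by (induction xs) auto

lemma hlsum_upt_closed [simp]: "(\<And>i. i < n \<Longrightarrow> f i \<in> hvecs H) \<Longrightarrow> hlsum H (map f [0..<n]) \<in> hvecs H"
  by (rule hlsum_closed) auto

lemma inner_hlsum_upt_right:
  assumes z: "z \<in> hvecs H" and f: "\<And>i. i < n \<Longrightarrow> f i \<in> hvecs H"
  shows "hinner H z (hlsum H (map f [0..<n])) = (\<Sum>i<n. hinner H z (f i))"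
proof -
  have "set (map f [0..<n]) \<subseteq> hvecs H" using f by auto
  with z have "hinner H z (hlsum H (map f [0..<n])) = (\<Sum>x\<leftarrow>map f [0..<n]. hinner H z x)"
    by (rule inner_hlsum_right)
  then show ?thesis by (simp add: interv_sum_list_conv_sum_set_nat atLeast0LessThan)
qed

lemma inner_hlsum_upt_left:
  assumes z: "z \<in> hvecs H" and f: "\<And>i. i < n \<Longrightarrow> f i \<in> hvecs H"
  shows "hinner H (hlsum H (map f [0..<n])) z = (\<Sum>i<n. hinner H (f i) z)"
proof -
  have "set (map f [0..<n]) \<subseteq> hvecs H" using f by auto
  with z have "hinner H (hlsum H (map f [0..<n])) z = (\<Sum>x\<leftarrow>map f [0..<n]. hinner H x z)"
    by (rule inner_hlsum_left)
  then show ?thesis by (simp add: interv_sum_list_conv_sum_set_nat atLeast0LessThan)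
qed

lemma orthonormal_basis_exists: "\<exists>B. orthonormal_basis H B"
proof -
  define orthonormal where "orthonormal B \<longleftrightarrow> B \<subseteq> hvecs H \<and> (\<forall>b\<in>B. hinner H b b = 1) \<and>
    (\<forall>b\<in>B. \<forall>b'\<in>B. b \<noteq> b' \<longrightarrow> hinner H b b' = 0)" for B
  have "\<Union>C \<in> Collect orthonormal" if C: "C \<in> chains (Collect orthonormal)" for C
  proof -
    have "\<exists>B\<in>C. b \<in> B \<and> b' \<in> B" if "b \<in> \<Union>C" "b' \<in> \<Union>C" for b b'
      using that chainsD[OF C] by (metis UnionE subsetD)
    then show ?thesis using chainsD2[OF C] unfolding orthonormal_def by (simp add: subset_iff) meson
  qed
  then obtain B where B: "orthonormal B" and maximal: "\<And>B'. orthonormal B' \<Longrightarrow> B \<subseteq> B' \<Longrightarrow> B' = B"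
    using Zorn_Lemma[of "Collect orthonormal"] by auto
  have "x = hzero H" if x: "x \<in> hvecs H" and orth: "\<forall>b\<in>B. hinner H b x = 0" for x
  proof (rule ccontr)
    assume "x \<noteq> hzero H"
    then have "hnorm H x \<noteq> 0" using hnorm_eq_zero[OF x] by blast
    then have pos: "hnorm H x > 0" using hnorm_nonneg[OF x] by linarith
    define u where "u = hscale H (complex_of_real (1 / hnorm H x)) x"
    have u: "u \<in> hvecs H" using x by (simp add: u_def)
    have "hinner H u u = 1"
      using x pos by (simp add: u_def inner_self_eq_hnorm_square[OF x] power2_eq_square)
    moreover have "hinner H b u = 0" if "b \<in> B" for b
      using that orth x B by (auto simp: u_def orthonormal_def)
    moreover from this have "hinner H u b = 0" if "b \<in> B" for b
      using that u B inner_commute[of u b] by (auto simp: orthonormal_def)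
    ultimately have "orthonormal (insert u B)" "u \<notin> B"
      using u B by (auto simp: orthonormal_def)
    then show False using maximal[of "insert u B"] by blast
  qed
  then have "orthonormal_basis H B" using B by (simp add: orthonormal_basis_def orthonormal_def)
  then show ?thesis ..
qed

lemma orthogonal_to_dense_imp_zero:
  assumes D: "D \<subseteq> hvecs H" and dense: "\<forall>x\<in>hvecs H. \<forall>e>0. \<exists>d\<in>D. hnorm H (hsub H x d) < e"
    and w: "w \<in> hvecs H" and orth: "\<forall>d\<in>D. hinner H d w = 0"
  shows "w = hzero H"
proof (rule ccontr)
  assume "w \<noteq> hzero H"
  then have "hnorm H w \<noteq> 0" using hnorm_eq_zero[OF w] by blast
  then have "hnorm H w > 0" using hnorm_nonneg[OF w] by linarith
  then obtain d where d: "d \<in> D" and close: "hnorm H (hsub H w d) < hnorm H w"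
    using bspec[OF dense w] by blast
  have dH: "d \<in> hvecs H" using d D by blast
  have dw: "hinner H d w = 0" using orth d by blast
  then have wd: "hinner H w d = 0" using inner_commute[OF w dH] by simp
  have "(hnorm H w)\<^sup>2 \<le> Re (hinner H w w) + Re (hinner H d d)"
    using w dH by (simp add: hnorm_square inner_self_nonneg)
  also have "\<dots> = (hnorm H (hsub H w d))\<^sup>2"
    using w dH dw wd by (simp add: hnorm_square)
  finally have "hnorm H w \<le> hnorm H (hsub H w d)"
    by (rule power2_le_imp_le) (simp add: hnorm_nonneg w dH)
  then show False using close by simp
qed

lemma separable_inj_nat_complex:
  assumes "separable_hspace H"
  obtains \<iota> :: "'a \<Rightarrow> nat \<Rightarrow> complex" where "inj_on \<iota> (hvecs H)"
proof -
  obtain D where D: "D \<subseteq> hvecs H" "countable D"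
    and dense: "\<forall>x\<in>hvecs H. \<forall>e>0. \<exists>d\<in>D. hnorm H (hsub H x d) < e"
    using assms unfolding separable_hspace_def by blast
  have "D \<noteq> {}" using dense zero_closed by (metis empty_iff zero_less_one)
  then have range_D: "range (from_nat_into D) = D" using D(2) by simp
  have "inj_on (\<lambda>y n. hinner H (from_nat_into D n) y) (hvecs H)"
  proof (rule inj_onI)
    fix y y' assume y: "y \<in> hvecs H" and y': "y' \<in> hvecs H"
      and eq: "(\<lambda>n. hinner H (from_nat_into D n) y) = (\<lambda>n. hinner H (from_nat_into D n) y')"
    have "hinner H d (hsub H y y') = 0" if "d \<in> D" for d
    proof -
      obtain n where "d = from_nat_into D n" using \<open>d \<in> D\<close> range_D by blast
      then show ?thesis using fun_cong[OF eq, of n] y y' D(1) \<open>d \<in> D\<close> by auto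
    qed
    then have "hsub H y y' = hzero H" using y y' D(1) dense by (intro orthogonal_to_dense_imp_zero) auto
    then show "y = y'" using y y' by (rule hsub_eq_zero_imp_eq[rotated 2])
  qed
  then show ?thesis using that by blast
qed

end

section \<open>Finite powers of a space\<close>

text \<open>\<open>H^N\<close>, as the functions vanishing from index \<open>N\<close> on: fixing these junk values makes equal
  tuples equal functions.\<close>
definition power_space :: "'a hspace \<Rightarrow> nat \<Rightarrow> (nat \<Rightarrow> 'a) hspace" where
  "power_space H N = \<lparr>hvecs = {x. (\<forall>j<N. x j \<in> hvecs H) \<and> (\<forall>j\<ge>N. x j = hzero H)},
     hadd = (\<lambda>x y j. if j < N then hadd H (x j) (y j) else hzero H),
     hscale = (\<lambda>c x j. if j < N then hscale H c (x j) else hzero H),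
     hzero = (\<lambda>j. hzero H),
     hinner = (\<lambda>x y. \<Sum>j<N. hinner H (x j) (y j))\<rparr>"

lemma power_space_simps [simp]:
  "x \<in> hvecs (power_space H N) \<longleftrightarrow> (\<forall>j<N. x j \<in> hvecs H) \<and> (\<forall>j\<ge>N. x j = hzero H)"
  "hadd (power_space H N) x y = (\<lambda>j. if j < N then hadd H (x j) (y j) else hzero H)"
  "hscale (power_space H N) c x = (\<lambda>j. if j < N then hscale H c (x j) else hzero H)"
  "hzero (power_space H N) = (\<lambda>j. hzero H)"
  "hinner (power_space H N) x y = (\<Sum>j<N. hinner H (x j) (y j))"
  by (simp_all add: power_space_def)

lemma power_space_eqI:
  assumes "x \<in> hvecs (power_space H N)" "y \<in> hvecs (power_space H N)" "\<And>j. j < N \<Longrightarrow> x j = y j"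
  shows "x = y"
  using assms by (metis not_le power_space_simps(1) ext)

definition block_scale :: "'a hspace \<Rightarrow> nat \<Rightarrow> (nat \<Rightarrow> complex) \<Rightarrow> (nat \<Rightarrow> 'a) \<Rightarrow> nat \<Rightarrow> 'a" where
  "block_scale H N w x = (\<lambda>j. if j < N then hscale H (w j) (x j) else hzero H)"

definition single_block :: "'a hspace \<Rightarrow> nat \<Rightarrow> 'a \<Rightarrow> nat \<Rightarrow> 'a" where
  "single_block H j b = (\<lambda>k. if k = j then b else hzero H)"

context inner_prod_space
begin

lemma inner_prod_space_power_space: "inner_prod_space (power_space H N)"
proof unfold_locales
  fix x assume x: "x \<in> hvecs (power_space H N)"
  show "\<exists>y\<in>hvecs (power_space H N). hadd (power_space H N) x y = hzero (power_space H N)"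
    by (rule bexI[of _ "hscale (power_space H N) (-1) x"]) (use x in \<open>auto simp: add_scale_minus_one\<close>)
  show "hinner (power_space H N) x x = 0 \<Longrightarrow> x = hzero (power_space H N)"
  proof -
    assume "hinner (power_space H N) x x = 0"
    then have "(\<Sum>j<N. Re (hinner H (x j) (x j))) = 0" by (simp flip: Re_sum)
    moreover have "(\<Sum>j<N. Re (hinner H (x j) (x j))) = 0 \<longleftrightarrow> (\<forall>j\<in>{..<N}. Re (hinner H (x j) (x j)) = 0)"
      using x by (intro sum_nonneg_eq_0_iff) (auto simp: inner_self_nonneg)
    ultimately have "x j = hzero H" if "j < N" for j
      using x that inner_self_real[of "x j"] inner_self_eq_zero[of "x j"] by auto
    then show ?thesis by (intro power_space_eqI[OF x]) simp_all
  qed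
  show "0 \<le> Re (hinner (power_space H N) x x)"
    using x by (auto intro: sum_nonneg inner_self_nonneg)
  show "hadd (power_space H N) (hzero (power_space H N)) x = x"
    using x by (auto intro: power_space_eqI)
  show "hscale (power_space H N) 1 x = x"
    using x by (auto intro: power_space_eqI)
next
  fix x y assume x: "x \<in> hvecs (power_space H N)" and y: "y \<in> hvecs (power_space H N)"
  show "hadd (power_space H N) x y = hadd (power_space H N) y x"
    using x y by (auto simp: add_commute)
  show "hinner (power_space H N) x y = cnj (hinner (power_space H N) y x)"
    using x y by (auto simp: inner_commute[of "x _"] intro: sum.cong)
qed (auto simp: add_assoc scale_left_distrib scale_right_distrib sum.distrib sum_distrib_left)

lemma hsub_power_space:
  "x \<in> hvecs (power_space H N) \<Longrightarrow> y \<in> hvecs (power_space H N) \<Longrightarrow>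
    hsub (power_space H N) x y = (\<lambda>j. if j < N then hsub H (x j) (y j) else hzero H)"
  by (auto simp: hsub_def)

lemma hnorm_power_space:
  assumes "x \<in> hvecs (power_space H N)"
  shows "hnorm (power_space H N) x = sqrt (\<Sum>j<N. (hnorm H (x j))\<^sup>2)"
  using assms by (simp add: hnorm_def inner_self_nonneg)

lemma hnorm_component_le:
  assumes x: "x \<in> hvecs (power_space H N)" and j: "j < N"
  shows "hnorm H (x j) \<le> hnorm (power_space H N) x"
proof -
  have "(hnorm H (x j))\<^sup>2 \<le> (\<Sum>j<N. (hnorm H (x j))\<^sup>2)"
    using j by (intro member_le_sum) auto
  then show ?thesis using x by (simp add: hnorm_power_space real_le_rsqrt)
qed

lemma hilbert_space_power_space:
  assumes "hilbert_space H"
  shows "hilbert_space (power_space H N)"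
  unfolding hilbert_space_def
proof (intro conjI allI impI)
  show "complex_inner_product_space (power_space H N)"
    using inner_prod_space_power_space inner_prod_space_iff by blast
  fix s :: "nat \<Rightarrow> nat \<Rightarrow> 'a"
  assume "(\<forall>n. s n \<in> hvecs (power_space H N)) \<and>
    (\<forall>e>0. \<exists>M. \<forall>m\<ge>M. \<forall>n\<ge>M. hnorm (power_space H N) (hsub (power_space H N) (s m) (s n)) < e)"
  then have s: "\<And>n. s n \<in> hvecs (power_space H N)"
    and cauchy: "\<forall>e>0. \<exists>M. \<forall>m\<ge>M. \<forall>n\<ge>M. hnorm (power_space H N) (hsub (power_space H N) (s m) (s n)) < e"
    by auto
  have "\<exists>l\<in>hvecs H. (\<lambda>n. hnorm H (hsub H (s n j) l)) \<longlonglongrightarrow> 0" if j: "j < N" for j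
  proof -
    have "hnorm H (hsub H (s m j) (s n j)) \<le> hnorm (power_space H N) (hsub (power_space H N) (s m) (s n))"
      for m n
      using hnorm_component_le[of "hsub (power_space H N) (s m) (s n)" N j] s j
        inner_prod_space.hsub_closed[OF inner_prod_space_power_space]
      by (simp add: hsub_power_space)
    then have "\<forall>e>0. \<exists>M. \<forall>m\<ge>M. \<forall>n\<ge>M. hnorm H (hsub H (s m j) (s n j)) < e"
      using cauchy by (meson le_less_trans)
    moreover have "\<forall>n. s n j \<in> hvecs H" using s j by simp
    ultimately show ?thesis
      using assms[unfolded hilbert_space_def, THEN conjunct2, rule_format, of "\<lambda>n. s n j"] by blast
  qed
  then obtain L where L: "\<And>j. j < N \<Longrightarrow> L j \<in> hvecs H"
    and lim: "\<And>j. j < N \<Longrightarrow> (\<lambda>n. hnorm H (hsub H (s n j) (L j))) \<longlonglongrightarrow> 0"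
    by metis
  define x where "x j = (if j < N then L j else hzero H)" for j
  have x: "x \<in> hvecs (power_space H N)" using L by (simp add: x_def)
  have "hnorm (power_space H N) (hsub (power_space H N) (s n) x) =
      sqrt (\<Sum>j<N. (hnorm H (hsub H (s n j) (L j)))\<^sup>2)" for n
    using s[of n] x inner_prod_space.hsub_closed[OF inner_prod_space_power_space]
    by (simp add: hnorm_power_space hsub_power_space x_def)
  moreover have "(\<lambda>n. sqrt (\<Sum>j<N. (hnorm H (hsub H (s n j) (L j)))\<^sup>2)) \<longlonglongrightarrow> sqrt (\<Sum>j<N. 0\<^sup>2)"
    by (intro tendsto_intros lim) simp
  ultimately have "(\<lambda>n. hnorm (power_space H N) (hsub (power_space H N) (s n) x)) \<longlonglongrightarrow> 0"
    by simp
  then show "\<exists>x\<in>hvecs (power_space H N). (\<lambda>n. hnorm (power_space H N) (hsub (power_space H N) (s n) x)) \<longlonglongrightarrow> 0"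
    using x by blast
qed

lemma separable_power_space:
  assumes "separable_hspace H" and "0 < N"
  shows "separable_hspace (power_space H N)"
proof -
  obtain D where D: "D \<subseteq> hvecs H" "countable D"
    and dense: "\<forall>x\<in>hvecs H. \<forall>e>0. \<exists>d\<in>D. hnorm H (hsub H x d) < e"
    using assms(1) unfolding separable_hspace_def by blast
  define vec where "vec l j = (if j < N then l ! j else hzero H)" for l :: "'a list" and j
  define DN where "DN = vec ` {l \<in> lists D. length l = N}"
  have "countable DN"
    unfolding DN_def by (intro countable_image countable_subset[OF _ countable_lists[OF D(2)]]) auto
  moreover have DN: "DN \<subseteq> hvecs (power_space H N)"
    using D(1) nth_mem by (fastforce simp: DN_def vec_def)
  moreover have "\<exists>d\<in>DN. hnorm (power_space H N) (hsub (power_space H N) x d) < e"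
    if x: "x \<in> hvecs (power_space H N)" and e: "e > 0" for x e
  proof -
    have "e / sqrt N > 0" using e assms(2) by simp
    then have "\<forall>j<N. \<exists>d\<in>D. hnorm H (hsub H (x j) d) < e / sqrt N" using dense x by simp
    then obtain g where g: "\<And>j. j < N \<Longrightarrow> g j \<in> D \<and> hnorm H (hsub H (x j) (g j)) < e / sqrt N"
      by metis
    define d where "d = vec (map g [0..<N])"
    have d: "d \<in> DN" unfolding DN_def d_def by (rule imageI) (use g in auto)
    then have dN: "d \<in> hvecs (power_space H N)" using DN by blast
    have "(hnorm H (hsub H (x j) (g j)))\<^sup>2 < (e / sqrt N)\<^sup>2" if "j < N" for j
      using g[OF that] x D(1) that by (intro power_strict_mono) (auto simp: hnorm_nonneg)
    then have "(\<Sum>j<N. (hnorm H (hsub H (x j) (g j)))\<^sup>2) < (\<Sum>j<N. (e / sqrt N)\<^sup>2)"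
      using assms(2) by (intro sum_strict_mono) auto
    also have "\<dots> = e\<^sup>2" using assms(2) by (simp add: power_divide)
    finally have "sqrt (\<Sum>j<N. (hnorm H (hsub H (x j) (g j)))\<^sup>2) < sqrt (e\<^sup>2)"
      by (rule real_sqrt_less_mono)
    moreover have "hnorm (power_space H N) (hsub (power_space H N) x d) =
        sqrt (\<Sum>j<N. (hnorm H (hsub H (x j) (g j)))\<^sup>2)"
      using x dN inner_prod_space.hsub_closed[OF inner_prod_space_power_space]
      by (simp add: hnorm_power_space hsub_power_space d_def vec_def)
    ultimately have "hnorm (power_space H N) (hsub (power_space H N) x d) < e" using e by simp
    then show ?thesis using d by blast
  qed
  ultimately show ?thesis unfolding separable_hspace_def by blast
qed

lemma block_scale_closed [simp]:
  "x \<in> hvecs (power_space H N) \<Longrightarrow> block_scale H N w x \<in> hvecs (power_space H N)"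
  by (simp add: block_scale_def)

lemma block_scale_one: "x \<in> hvecs (power_space H N) \<Longrightarrow> block_scale H N (\<lambda>j. 1) x = x"
  by (rule power_space_eqI) (simp_all add: block_scale_def)

lemma hnorm_block_scale_le:
  assumes x: "x \<in> hvecs (power_space H N)" and c: "0 \<le> c" and w: "\<And>j. j < N \<Longrightarrow> cmod (w j) \<le> c"
  shows "hnorm (power_space H N) (block_scale H N w x) \<le> c * hnorm (power_space H N) x"
proof -
  have "(hnorm H (block_scale H N w x j))\<^sup>2 \<le> c\<^sup>2 * (hnorm H (x j))\<^sup>2" if "j < N" for j
    using x w[OF that] that
    by (simp add: block_scale_def hnorm_scale power_mult_distrib mult_right_mono power_mono)
  then have "(\<Sum>j<N. (hnorm H (block_scale H N w x j))\<^sup>2) \<le> c\<^sup>2 * (\<Sum>j<N. (hnorm H (x j))\<^sup>2)"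
    by (auto simp: sum_distrib_left intro: sum_mono)
  then have "sqrt (\<Sum>j<N. (hnorm H (block_scale H N w x j))\<^sup>2) \<le> c * sqrt (\<Sum>j<N. (hnorm H (x j))\<^sup>2)"
    using c by (metis real_sqrt_le_mono real_sqrt_mult real_sqrt_pow2 real_sqrt_power real_sqrt_unique
        zero_le_power2)
  then show ?thesis by (simp add: hnorm_power_space[OF x] hnorm_power_space[OF block_scale_closed[OF x]])
qed

lemma bounded_linear_op_block_scale: "bounded_linear_op (power_space H N) (power_space H N) (block_scale H N w)"
  unfolding bounded_linear_op_def
proof (intro conjI ballI allI)
  show "\<exists>K. \<forall>x\<in>hvecs (power_space H N).
      hnorm (power_space H N) (block_scale H N w x) \<le> K * hnorm (power_space H N) x"
    using hnorm_block_scale_le[where c = "\<Sum>j<N. cmod (w j)"]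
    by (meson member_le_sum finite_lessThan lessThan_iff norm_ge_zero sum_nonneg)
qed (auto simp: block_scale_def scale_right_distrib mult.commute)

lemma single_block_closed [simp]:
  "j < N \<Longrightarrow> b \<in> hvecs H \<Longrightarrow> single_block H j b \<in> hvecs (power_space H N)"
  by (simp add: single_block_def)

lemma inner_single_block:
  assumes "j < N" "b \<in> hvecs H" "x \<in> hvecs (power_space H N)"
  shows "hinner (power_space H N) (single_block H j b) x = hinner H b (x j)"
  using assms by (simp add: single_block_def if_distrib[of "\<lambda>v. hinner H v _"] sum.delta cong: if_cong)

lemma orthonormal_basis_power_space:
  assumes B: "orthonormal_basis H B"
  shows "orthonormal_basis (power_space H N) {single_block H j b | j b. j < N \<and> b \<in> B}"
    (is "orthonormal_basis _ ?B")
  unfolding orthonormal_basis_def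
proof (intro conjI ballI impI)
  have BH: "B \<subseteq> hvecs H" using B by (simp add: orthonormal_basis_def)
  then show "?B \<subseteq> hvecs (power_space H N)" by (auto simp del: power_space_simps)
  fix v assume "v \<in> ?B"
  then obtain j b where v: "v = single_block H j b" "j < N" "b \<in> B" by blast
  have b: "b \<in> hvecs H" using v BH by blast
  have "hinner (power_space H N) v v = hinner H b b"
    using inner_single_block[OF v(2) b single_block_closed[OF v(2) b]] by (simp add: v(1) single_block_def)
  then show "hinner (power_space H N) v v = 1" using B v(3) by (simp add: orthonormal_basis_def)
  fix v' assume "v' \<in> ?B" and ne: "v \<noteq> v'"
  then obtain j' b' where v': "v' = single_block H j' b'" "j' < N" "b' \<in> B" by blast
  have b': "b' \<in> hvecs H" using v' BH by blast
  have inner_v_v': "hinner (power_space H N) v v' = hinner H b (single_block H j' b' j)"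
    using inner_single_block[OF v(2) b single_block_closed[OF v'(2) b']] by (simp only: v(1) v'(1))
  show "hinner (power_space H N) v v' = 0"
  proof (cases "j = j'")
    case True
    then have "b \<noteq> b'" using ne v(1) v'(1) by auto
    then show ?thesis using inner_v_v' B v(3) v'(3) True by (simp add: single_block_def orthonormal_basis_def)
  next
    case False
    then show ?thesis using inner_v_v' b by (simp add: single_block_def)
  qed
next
  fix x assume x: "x \<in> hvecs (power_space H N)" and orth: "\<forall>v\<in>?B. hinner (power_space H N) v x = 0"
  have "hinner H b (x j) = 0" if "j < N" "b \<in> B" for j b
  proof -
    have "b \<in> hvecs H" using that B by (auto simp: orthonormal_basis_def)
    moreover have "hinner (power_space H N) (single_block H j b) x = 0" using orth that by blast
    ultimately show ?thesis using inner_single_block[OF that(1) _ x] by simp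
  qed
  then have "x j = hzero H" if "j < N" for j
    using B x that by (simp add: orthonormal_basis_def)
  then show "x = hzero (power_space H N)" by (intro power_space_eqI[OF x]) simp_all
qed

lemma diagonal_block_scale: "diagonal (power_space H N) (block_scale H N w)"
proof -
  obtain B where B: "orthonormal_basis H B" using orthonormal_basis_exists ..
  have "eigenvector (power_space H N) (block_scale H N w) (single_block H j b)" if "j < N" "b \<in> B" for j b
  proof -
    have "b \<in> hvecs H" "b \<noteq> hzero H" using B that by (auto simp: orthonormal_basis_def)
    moreover have "block_scale H N w (single_block H j b) = hscale (power_space H N) (w j) (single_block H j b)"
      by (auto simp: block_scale_def single_block_def)
    ultimately show ?thesis using that by (auto simp: eigenvector_def single_block_def fun_eq_iff)
  qed
  then show ?thesis
    unfolding diagonal_def using bounded_linear_op_block_scale orthonormal_basis_power_space[OF B] by blast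
qed

end

section \<open>Characters of the cyclic group\<close>

lemma sum_cis_multiples:
  fixes d :: int
  assumes N: "0 < N"
  shows "(\<Sum>j<N. cis (2 * pi * real j * of_int d / real N)) = (if int N dvd d then of_nat N else 0)"
proof (cases "int N dvd d")
  case True
  then obtain q where q: "d = int N * q" by blast
  have "cis (2 * pi * real j * of_int d / real N) = 1" for j
  proof -
    have "2 * pi * real j * of_int d / real N = 2 * pi * of_int (int j * q)"
      using N by (simp add: q)
    then show ?thesis by simp
  qed
  then show ?thesis using True by simp
next
  case False
  define \<zeta> where "\<zeta> = cis (2 * pi * of_int d / real N)"
  have powers: "cis (2 * pi * real j * of_int d / real N) = \<zeta> ^ j" for j
    by (simp add: \<zeta>_def DeMoivre algebra_simps)
  have "\<zeta> ^ N = 1"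
  proof -
    have "real N * (2 * pi * of_int d / real N) = 2 * pi * of_int d" using N by simp
    then show ?thesis by (simp add: \<zeta>_def DeMoivre)
  qed
  moreover have "\<zeta> \<noteq> 1"
  proof
    assume "\<zeta> = 1"
    then have "cos (2 * pi * of_int d / real N) = 1" by (simp add: \<zeta>_def complex_eq_iff)
    then obtain n :: int where "2 * pi * of_int d / real N = of_int n * 2 * pi"
      by (auto simp: cos_one_2pi_int)
    then have "real_of_int d = real_of_int (n * int N)" using N by (simp add: field_simps)
    then show False using False by (simp only: of_int_eq_iff) simp
  qed
  ultimately show ?thesis using False by (simp add: powers geometric_sum)
qed

text \<open>The coefficient of \<open>z^i\<close> in the polynomial \<open>p_j\<close> of the construction (with \<open>\<omega> = e^(2\<pi>i/N)\<close>).\<close>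
definition fourier_coeff :: "nat \<Rightarrow> nat \<Rightarrow> nat \<Rightarrow> nat \<Rightarrow> complex" where
  "fourier_coeff N M j i = cis (- (2 * pi * real j * real i / real N)) / complex_of_real (sqrt (real N * real M))"

lemma cis_mult_fourier_coeff_product:
  "cis (2 * pi * real (j * k) / real N) * (cnj (fourier_coeff N M j i) * fourier_coeff N M j i') =
    cis (2 * pi * real j * of_int (int k + int i - int i') / real N) / of_nat (N * M)"
proof -
  have sqrt_square: "complex_of_real (sqrt (real N * real M)) * complex_of_real (sqrt (real N * real M)) =
      of_nat (N * M)"
    by (metis of_real_mult of_real_of_nat_eq of_nat_mult real_sqrt_mult_self abs_of_nonneg of_nat_0_le_iff)
  have "cnj (fourier_coeff N M j i) * fourier_coeff N M j i' =
      cnj (cis (- (2 * pi * real j * real i / real N))) * cis (- (2 * pi * real j * real i' / real N)) /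
      (complex_of_real (sqrt (real N * real M)) * complex_of_real (sqrt (real N * real M)))"
    by (simp add: fourier_coeff_def)
  also have "\<dots> = cis (2 * pi * real j * real i / real N - 2 * pi * real j * real i' / real N) / of_nat (N * M)"
    by (simp only: sqrt_square) (simp add: cis_cnj cis_mult)
  finally have "cis (2 * pi * real (j * k) / real N) * (cnj (fourier_coeff N M j i) * fourier_coeff N M j i') =
      cis (2 * pi * real (j * k) / real N + (2 * pi * real j * real i / real N - 2 * pi * real j * real i' / real N))
      / of_nat (N * M)"
    by (simp add: cis_mult)
  also have "2 * pi * real (j * k) / real N + (2 * pi * real j * real i / real N - 2 * pi * real j * real i' / real N)
      = 2 * pi * real j * of_int (int k + int i - int i') / real N"
    by (simp add: diff_divide_distrib add_divide_distrib algebra_simps)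
  finally show ?thesis .
qed

lemma fourier_coeff_orthogonality:
  assumes i: "i < M" and i': "i' < M" and k: "k + M \<le> N"
  shows "(\<Sum>j<N. cis (2 * pi * real (j * k) / real N) * (cnj (fourier_coeff N M j i) * fourier_coeff N M j i')) =
    (if i' = i + k then 1 / of_nat M else 0)"
proof -
  have N: "0 < N" using i k by linarith
  define d where "d = int k + int i - int i'"
  have "(\<Sum>j<N. cis (2 * pi * real (j * k) / real N) * (cnj (fourier_coeff N M j i) * fourier_coeff N M j i')) =
      (\<Sum>j<N. cis (2 * pi * real j * of_int d / real N)) / of_nat (N * M)"
    by (simp only: cis_mult_fourier_coeff_product d_def[symmetric] sum_divide_distrib)
  also have "\<dots> = (if int N dvd d then 1 / of_nat M else 0)"
    using N by (simp add: sum_cis_multiples)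
  also have "int N dvd d \<longleftrightarrow> i' = i + k"
  proof
    assume dvd: "int N dvd d"
    have bound: "\<bar>d\<bar> < int N" using i i' k by (simp add: d_def)
    show "i' = i + k"
    proof (rule ccontr)
      assume "i' \<noteq> i + k"
      then have "d \<noteq> 0" by (simp add: d_def)
      then have "\<bar>int N\<bar> \<le> \<bar>d\<bar>" using dvd by (rule dvd_imp_le_int)
      then show False using bound by simp
    qed
  qed (simp add: d_def)
  finally show ?thesis .
qed

lemma sum_superdiagonal_toeplitz:
  fixes K :: "nat \<Rightarrow> nat \<Rightarrow> 'a::semiring_1"
  assumes shift: "\<And>i i'. K (Suc i) (Suc i') = K i i'"
  shows "(\<Sum>i<M. \<Sum>i'<M. if i' = i + k then K i i' else 0) = of_nat (M - k) * K 0 k"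
proof -
  have diagonal: "K i (i + k) = K 0 k" for i by (induction i) (simp_all add: shift)
  have "(\<Sum>i<M. \<Sum>i'<M. if i' = i + k then K i i' else 0) = (\<Sum>i<M. if i + k < M then K 0 k else 0)"
    by (intro sum.cong refl) (simp add: sum.delta diagonal)
  also have "\<dots> = (\<Sum>i\<in>{..<M - k}. K 0 k)"
  proof -
    have "{..<M} \<inter> {i. i + k < M} = {..<M - k}" by auto
    then show ?thesis by (simp add: sum.If_cases)
  qed
  finally show ?thesis by simp
qed

section \<open>The dilation\<close>

definition diagonal_dilation ::
    "'y hspace \<Rightarrow> ('y \<Rightarrow> 'y) \<Rightarrow> real \<Rightarrow> 'x hspace \<Rightarrow> ('x \<Rightarrow> 'x) \<Rightarrow> ('y \<Rightarrow> 'x) \<Rightarrow> ('x \<Rightarrow> 'y) \<Rightarrow> bool"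
  where "diagonal_dilation Y U c X D V W \<longleftrightarrow>
    hilbert_space X \<and> separable_hspace X \<and> diagonal X D \<and> (\<forall>x\<in>hvecs X. hnorm X (D x) \<le> c * hnorm X x) \<and>
    isometry Y X V \<and> is_adjoint Y X V W \<and> (\<forall>y\<in>hvecs Y. W (D (V y)) = U y)"

locale isometric_operator = inner_prod_space H for H :: "'a hspace" +
  fixes U S :: "'a \<Rightarrow> 'a"
  assumes bounded_linear_U: "bounded_linear_op H H U"
    and adjoint_S: "is_adjoint H H U S"
    and inner_U_U: "\<And>x y. x \<in> hvecs H \<Longrightarrow> y \<in> hvecs H \<Longrightarrow> hinner H (U x) (U y) = hinner H x y"
begin

lemma U_closed [simp]: "x \<in> hvecs H \<Longrightarrow> U x \<in> hvecs H"
  using bounded_linear_U by (simp add: bounded_linear_op_def)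

lemma U_add: "x \<in> hvecs H \<Longrightarrow> y \<in> hvecs H \<Longrightarrow> U (hadd H x y) = hadd H (U x) (U y)"
  using bounded_linear_U by (simp add: bounded_linear_op_def)

lemma U_scale: "x \<in> hvecs H \<Longrightarrow> U (hscale H c x) = hscale H c (U x)"
  using bounded_linear_U by (simp add: bounded_linear_op_def)

lemma S_closed [simp]: "x \<in> hvecs H \<Longrightarrow> S x \<in> hvecs H"
  using adjoint_S by (simp add: is_adjoint_def)

lemma inner_U_left: "x \<in> hvecs H \<Longrightarrow> y \<in> hvecs H \<Longrightarrow> hinner H (U x) y = hinner H x (S y)"
  using adjoint_S by (simp add: is_adjoint_def)

lemma funpow_U_closed [simp]: "x \<in> hvecs H \<Longrightarrow> (U ^^ i) x \<in> hvecs H"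
  by (induction i) auto

lemma funpow_S_closed [simp]: "x \<in> hvecs H \<Longrightarrow> (S ^^ i) x \<in> hvecs H"
  by (induction i) auto

lemma funpow_U_add: "x \<in> hvecs H \<Longrightarrow> y \<in> hvecs H \<Longrightarrow> (U ^^ i) (hadd H x y) = hadd H ((U ^^ i) x) ((U ^^ i) y)"
  by (induction i) (auto simp: U_add)

lemma funpow_U_scale: "x \<in> hvecs H \<Longrightarrow> (U ^^ i) (hscale H c x) = hscale H c ((U ^^ i) x)"
  by (induction i) (auto simp: U_scale)

lemma inner_funpow_U_left:
  "x \<in> hvecs H \<Longrightarrow> y \<in> hvecs H \<Longrightarrow> hinner H ((U ^^ i) x) y = hinner H x ((S ^^ i) y)"
proof (induction i arbitrary: y)
  case (Suc i)
  have "hinner H ((U ^^ Suc i) x) y = hinner H ((U ^^ i) x) (S y)" using Suc.prems by (simp add: inner_U_left)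
  also have "\<dots> = hinner H x ((S ^^ Suc i) y)" using Suc by (simp add: funpow_Suc_right del: funpow.simps)
  finally show ?case .
qed simp

definition dilation_component :: "nat \<Rightarrow> nat \<Rightarrow> nat \<Rightarrow> 'a \<Rightarrow> 'a" where
  "dilation_component N M j y = hlsum H (map (\<lambda>i. hscale H (fourier_coeff N M j i) ((U ^^ i) y)) [0..<M])"

definition dilation :: "nat \<Rightarrow> nat \<Rightarrow> 'a \<Rightarrow> nat \<Rightarrow> 'a" where
  "dilation N M y = (\<lambda>j. if j < N then dilation_component N M j y else hzero H)"

definition dilation_adjoint :: "nat \<Rightarrow> nat \<Rightarrow> (nat \<Rightarrow> 'a) \<Rightarrow> 'a" where
  "dilation_adjoint N M x = hlsum H (map (\<lambda>j.
     hlsum H (map (\<lambda>i. hscale H (cnj (fourier_coeff N M j i)) ((S ^^ i) (x j))) [0..<M])) [0..<N])"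

lemma dilation_component_closed [simp]: "y \<in> hvecs H \<Longrightarrow> dilation_component N M j y \<in> hvecs H"
  by (simp add: dilation_component_def)

lemma dilation_closed [simp]: "y \<in> hvecs H \<Longrightarrow> dilation N M y \<in> hvecs (power_space H N)"
  by (simp add: dilation_def)

lemma dilation_adjoint_closed [simp]: "x \<in> hvecs (power_space H N) \<Longrightarrow> dilation_adjoint N M x \<in> hvecs H"
  by (simp add: dilation_adjoint_def)

lemma inner_dilation_component_right:
  "w \<in> hvecs H \<Longrightarrow> y \<in> hvecs H \<Longrightarrow>
    hinner H w (dilation_component N M j y) = (\<Sum>i<M. fourier_coeff N M j i * hinner H w ((U ^^ i) y))"
  by (simp add: dilation_component_def inner_hlsum_upt_right)

lemma inner_dilation_component_left:
  "w \<in> hvecs H \<Longrightarrow> y \<in> hvecs H \<Longrightarrow>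
    hinner H (dilation_component N M j y) w = (\<Sum>i<M. cnj (fourier_coeff N M j i) * hinner H ((U ^^ i) y) w)"
  by (simp add: dilation_component_def inner_hlsum_upt_left)

lemma inner_dilation_component:
  assumes z: "z \<in> hvecs H" and y: "y \<in> hvecs H"
  shows "hinner H (dilation_component N M j z) (dilation_component N M j y) =
    (\<Sum>i<M. \<Sum>i'<M. cnj (fourier_coeff N M j i) * fourier_coeff N M j i' * hinner H ((U ^^ i) z) ((U ^^ i') y))"
  unfolding inner_dilation_component_left[OF dilation_component_closed[OF y] z]
  using z y by (simp add: inner_dilation_component_right sum_distrib_left mult.assoc)

lemma inner_dilation_adjoint:
  assumes y: "y \<in> hvecs H" and x: "x \<in> hvecs (power_space H N)"
  shows "hinner (power_space H N) (dilation N M y) x = hinner H y (dilation_adjoint N M x)"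
proof -
  have "hinner (power_space H N) (dilation N M y) x = (\<Sum>j<N. hinner H (dilation_component N M j y) (x j))"
    by (simp add: dilation_def)
  also have "\<dots> = (\<Sum>j<N. \<Sum>i<M. cnj (fourier_coeff N M j i) * hinner H y ((S ^^ i) (x j)))"
    using x y by (intro sum.cong refl) (simp add: inner_dilation_component_left inner_funpow_U_left)
  also have "\<dots> = hinner H y (dilation_adjoint N M x)"
    using x y by (simp add: dilation_adjoint_def inner_hlsum_upt_right)
  finally show ?thesis .
qed

lemma is_adjoint_dilation: "is_adjoint H (power_space H N) (dilation N M) (dilation_adjoint N M)"
  by (simp add: is_adjoint_def inner_dilation_adjoint del: power_space_simps)

lemma inner_dilation_block_scale:
  assumes z: "z \<in> hvecs H" and y: "y \<in> hvecs H"
  shows "hinner (power_space H N) (dilation N M z) (block_scale H N w (dilation N M y)) =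
    (\<Sum>i<M. \<Sum>i'<M. (\<Sum>j<N. w j * (cnj (fourier_coeff N M j i) * fourier_coeff N M j i')) *
      hinner H ((U ^^ i) z) ((U ^^ i') y))"
proof -
  have "hinner (power_space H N) (dilation N M z) (block_scale H N w (dilation N M y)) =
      (\<Sum>j<N. \<Sum>i<M. \<Sum>i'<M. w j * (cnj (fourier_coeff N M j i) * fourier_coeff N M j i') *
        hinner H ((U ^^ i) z) ((U ^^ i') y))"
    unfolding power_space_simps using z y
    by (intro sum.cong refl) (simp add: dilation_def block_scale_def inner_dilation_component sum_distrib_left mult_ac)
  also have "\<dots> = (\<Sum>i<M. \<Sum>i'<M. \<Sum>j<N. w j * (cnj (fourier_coeff N M j i) * fourier_coeff N M j i') *
        hinner H ((U ^^ i) z) ((U ^^ i') y))"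
    by (subst sum.swap) (simp add: sum.swap[of _ "{..<N}"])
  finally show ?thesis by (simp add: sum_distrib_right)
qed

lemma inner_dilation_character:
  assumes z: "z \<in> hvecs H" and y: "y \<in> hvecs H" and k: "k + M \<le> N"
  shows "hinner (power_space H N) (dilation N M z)
      (block_scale H N (\<lambda>j. a * cis (2 * pi * real (j * k) / real N)) (dilation N M y)) =
    of_nat (M - k) * (a / of_nat M * hinner H z ((U ^^ k) y))"
proof -
  let ?K = "\<lambda>i i'. a / of_nat M * hinner H ((U ^^ i) z) ((U ^^ i') y)"
  have coeff: "(\<Sum>j<N. a * cis (2 * pi * real (j * k) / real N) * (cnj (fourier_coeff N M j i) * fourier_coeff N M j i'))
      = (if i' = i + k then a / of_nat M else 0)" if "i \<in> {..<M}" "i' \<in> {..<M}" for i i'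
  proof -
    have "(\<Sum>j<N. a * cis (2 * pi * real (j * k) / real N) * (cnj (fourier_coeff N M j i) * fourier_coeff N M j i'))
        = a * (\<Sum>j<N. cis (2 * pi * real (j * k) / real N) * (cnj (fourier_coeff N M j i) * fourier_coeff N M j i'))"
      by (simp add: sum_distrib_left mult.assoc)
    also have "\<dots> = a * (if i' = i + k then 1 / of_nat M else 0)"
      using that by (simp only: fourier_coeff_orthogonality[OF _ _ k] lessThan_iff)
    finally show ?thesis by simp
  qed
  have "hinner (power_space H N) (dilation N M z)
      (block_scale H N (\<lambda>j. a * cis (2 * pi * real (j * k) / real N)) (dilation N M y)) =
    (\<Sum>i<M. \<Sum>i'<M. if i' = i + k then ?K i i' else 0)"
    unfolding inner_dilation_block_scale[OF z y] by (intro sum.cong refl) (simp only: coeff, simp)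
  also have "\<dots> = of_nat (M - k) * ?K 0 k"
    by (rule sum_superdiagonal_toeplitz) (simp add: inner_U_U z y)
  finally show ?thesis by simp
qed

lemma inner_dilation_dilation:
  assumes "z \<in> hvecs H" "y \<in> hvecs H" and "0 < M" "M \<le> N"
  shows "hinner (power_space H N) (dilation N M z) (dilation N M y) = hinner H z y"
  using inner_dilation_character[of z y 0 M N 1] assms by (simp add: block_scale_one del: power_space_simps)

lemma dilation_component_add:
  "x \<in> hvecs H \<Longrightarrow> y \<in> hvecs H \<Longrightarrow>
    dilation_component N M j (hadd H x y) = hadd H (dilation_component N M j x) (dilation_component N M j y)"
  by (rule hvecs_eqI)
    (simp_all add: inner_dilation_component_right funpow_U_add sum.distrib distrib_left)

lemma dilation_component_scale:
  "x \<in> hvecs H \<Longrightarrow> dilation_component N M j (hscale H c x) = hscale H c (dilation_component N M j x)"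
  by (rule hvecs_eqI)
    (simp_all add: inner_dilation_component_right funpow_U_scale sum_distrib_left mult_ac)

lemma isometry_dilation:
  assumes "0 < M" "M \<le> N"
  shows "isometry H (power_space H N) (dilation N M)"
proof -
  have norm: "hnorm (power_space H N) (dilation N M y) = hnorm H y" if "y \<in> hvecs H" for y
    using inner_dilation_dilation[OF that that assms] by (simp add: hnorm_def)
  then show ?thesis
    unfolding isometry_def bounded_linear_op_def
    by (auto simp: dilation_def dilation_component_add dilation_component_scale intro!: exI[of _ 1])
qed

definition dilation_diagonal :: "nat \<Rightarrow> nat \<Rightarrow> (nat \<Rightarrow> 'a) \<Rightarrow> nat \<Rightarrow> 'a" where
  "dilation_diagonal N M =
     block_scale H N (\<lambda>j. complex_of_real (real M / (real M - 1)) * cis (2 * pi * real j / real N))"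

lemma dilation_adjoint_diagonal_dilation:
  assumes y: "y \<in> hvecs H" and M: "2 \<le> M" "M < N"
  shows "dilation_adjoint N M (dilation_diagonal N M (dilation N M y)) = U y"
proof (rule hvecs_eqI)
  fix z assume z: "z \<in> hvecs H"
  let ?r = "complex_of_real (real M / (real M - 1))"
  have "hinner H z (dilation_adjoint N M (dilation_diagonal N M (dilation N M y))) =
      hinner (power_space H N) (dilation N M z) (dilation_diagonal N M (dilation N M y))"
    using y z by (simp add: inner_dilation_adjoint dilation_diagonal_def del: power_space_simps)
  also have "\<dots> = of_nat (M - 1) * (?r / of_nat M * hinner H z (U y))"
    using inner_dilation_character[of z y 1 M N ?r] y z M by (simp add: dilation_diagonal_def)
  also have "\<dots> = hinner H z (U y)"
    using M by (simp add: of_nat_diff field_simps)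
  finally show "hinner H z (dilation_adjoint N M (dilation_diagonal N M (dilation N M y))) = hinner H z (U y)" .
qed (use y in \<open>simp_all add: dilation_diagonal_def del: power_space_simps\<close>)

lemma diagonal_dilation_power_space:
  assumes "hilbert_space H" "separable_hspace H" and M: "2 \<le> M" "M < N" and c: "real M / (real M - 1) \<le> c"
  shows "diagonal_dilation H U c (power_space H N) (dilation_diagonal N M) (dilation N M) (dilation_adjoint N M)"
proof -
  define r where "r = real M / (real M - 1)"
  have "0 \<le> r" using M by (simp add: r_def)
  moreover have "cmod (complex_of_real r * cis t) = r" for t using \<open>0 \<le> r\<close> by (simp add: norm_mult)
  ultimately have "hnorm (power_space H N) (dilation_diagonal N M x) \<le> c * hnorm (power_space H N) x"
    if "x \<in> hvecs (power_space H N)" for x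
    unfolding dilation_diagonal_def r_def[symmetric] using c[folded r_def]
    by (intro hnorm_block_scale_le[OF that]) auto
  then show ?thesis
    using assms hilbert_space_power_space separable_power_space diagonal_block_scale isometry_dilation
      is_adjoint_dilation dilation_adjoint_diagonal_dilation
    by (simp add: diagonal_dilation_def dilation_diagonal_def)
qed

end

lemma unitary_imp_isometric_operator:
  assumes "complex_inner_product_space H" and "unitary H U"
  obtains S where "isometric_operator H U S"
proof -
  obtain S where adjoint: "is_adjoint H H U S" and inverse: "\<forall>x\<in>hvecs H. S (U x) = x"
    using assms(2) unfolding unitary_def by blast
  have U: "bounded_linear_op H H U" using assms(2) unfolding unitary_def by blast
  have "isometric_operator H U S"
  proof (intro isometric_operator.intro isometric_operator_axioms.intro)
    show "inner_prod_space H" using assms(1) inner_prod_space_iff by blast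
    show "hinner H (U x) (U y) = hinner H x y" if "x \<in> hvecs H" "y \<in> hvecs H" for x y
      using that adjoint inverse U by (simp add: is_adjoint_def bounded_linear_op_def)
  qed (fact U adjoint)+
  then show ?thesis using that by blast
qed

lemma ex_nat_div_pred_le:
  assumes "0 < \<epsilon>"
  shows "\<exists>M::nat. 2 \<le> M \<and> real M / (real M - 1) \<le> 1 + \<epsilon>"
proof (intro exI conjI)
  define M where "M = nat \<lceil>1 / \<epsilon>\<rceil> + 2"
  show "2 \<le> M" by (simp add: M_def)
  have "1 / \<epsilon> \<le> real M - 1" using assms by (simp add: M_def) linarith
  then have "1 \<le> \<epsilon> * (real M - 1)" using assms by (simp add: field_simps)
  then show "real M / (real M - 1) \<le> 1 + \<epsilon>" using \<open>2 \<le> M\<close> by (simp add: field_simps)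
qed

section \<open>Transport along an injection\<close>

definition image_space :: "'a hspace \<Rightarrow> ('a \<Rightarrow> 'b) \<Rightarrow> 'b hspace" where
  "image_space H f = \<lparr>hvecs = f ` hvecs H,
     hadd = (\<lambda>x y. f (hadd H (inv_into (hvecs H) f x) (inv_into (hvecs H) f y))),
     hscale = (\<lambda>c x. f (hscale H c (inv_into (hvecs H) f x))),
     hzero = f (hzero H),
     hinner = (\<lambda>x y. hinner H (inv_into (hvecs H) f x) (inv_into (hvecs H) f y))\<rparr>"

locale space_embedding = inner_prod_space H for H :: "'a hspace" +
  fixes f :: "'a \<Rightarrow> 'b"
  assumes inj_f: "inj_on f (hvecs H)"
begin

abbreviation "f_inv \<equiv> inv_into (hvecs H) f"

lemma f_inv_f [simp]: "x \<in> hvecs H \<Longrightarrow> f_inv (f x) = x"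
  using inj_f by simp

lemma f_eq_iff [simp]: "x \<in> hvecs H \<Longrightarrow> y \<in> hvecs H \<Longrightarrow> f x = f y \<longleftrightarrow> x = y"
  using inj_f by (auto dest: inj_onD)

lemma image_space_simps [simp]:
  "hvecs (image_space H f) = f ` hvecs H"
  "x \<in> hvecs H \<Longrightarrow> y \<in> hvecs H \<Longrightarrow> hadd (image_space H f) (f x) (f y) = f (hadd H x y)"
  "x \<in> hvecs H \<Longrightarrow> hscale (image_space H f) c (f x) = f (hscale H c x)"
  "hzero (image_space H f) = f (hzero H)"
  "x \<in> hvecs H \<Longrightarrow> y \<in> hvecs H \<Longrightarrow> hinner (image_space H f) (f x) (f y) = hinner H x y"
  by (simp_all add: image_space_def)

lemma hsub_image_space [simp]:
  "x \<in> hvecs H \<Longrightarrow> y \<in> hvecs H \<Longrightarrow> hsub (image_space H f) (f x) (f y) = f (hsub H x y)"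
  by (simp add: hsub_def)

lemma hnorm_image_space [simp]: "x \<in> hvecs H \<Longrightarrow> hnorm (image_space H f) (f x) = hnorm H x"
  by (simp add: hnorm_def)

lemma inner_prod_space_image_space: "inner_prod_space (image_space H f)"
proof unfold_locales
  fix x' assume "x' \<in> hvecs (image_space H f)"
  then obtain x where x: "x \<in> hvecs H" and "x' = f x" by auto
  then show "\<exists>y\<in>hvecs (image_space H f). hadd (image_space H f) x' y = hzero (image_space H f)"
    using add_scale_minus_one[OF x] by (auto intro!: bexI[of _ "f (hscale H (-1) x)"])
qed (auto simp: add_assoc scale_left_distrib scale_right_distrib inner_self_nonneg
    intro: add_commute inner_commute inner_self_eq_zero)

lemma hilbert_space_image_space:
  assumes "hilbert_space H"
  shows "hilbert_space (image_space H f)"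
  unfolding hilbert_space_def
proof (intro conjI allI impI)
  show "complex_inner_product_space (image_space H f)"
    using inner_prod_space_image_space inner_prod_space_iff by blast
  fix s :: "nat \<Rightarrow> 'b"
  assume s: "(\<forall>n. s n \<in> hvecs (image_space H f)) \<and>
    (\<forall>e>0. \<exists>N. \<forall>m\<ge>N. \<forall>n\<ge>N. hnorm (image_space H f) (hsub (image_space H f) (s m) (s n)) < e)"
  define t where "t n = f_inv (s n)" for n
  have t: "t n \<in> hvecs H" and s_t: "s n = f (t n)" for n
    using s by (auto simp: t_def inv_into_into f_inv_into_f)
  then have "(\<forall>n. t n \<in> hvecs H) \<and> (\<forall>e>0. \<exists>N. \<forall>m\<ge>N. \<forall>n\<ge>N. hnorm H (hsub H (t m) (t n)) < e)"
    using s by simp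
  then obtain x where "x \<in> hvecs H" "(\<lambda>n. hnorm H (hsub H (t n) x)) \<longlonglongrightarrow> 0"
    using assms unfolding hilbert_space_def by blast
  then show "\<exists>x\<in>hvecs (image_space H f). (\<lambda>n. hnorm (image_space H f) (hsub (image_space H f) (s n) x)) \<longlonglongrightarrow> 0"
    using t by (auto simp: s_t)
qed

lemma separable_image_space:
  assumes "separable_hspace H"
  shows "separable_hspace (image_space H f)"
proof -
  obtain D where "D \<subseteq> hvecs H" "countable D" "\<forall>x\<in>hvecs H. \<forall>e>0. \<exists>d\<in>D. hnorm H (hsub H x d) < e"
    using assms unfolding separable_hspace_def by blast
  then show ?thesis unfolding separable_hspace_def
    by (intro exI[of _ "f ` D"]) (fastforce simp: subset_iff)
qed

lemma diagonal_image_space: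
  assumes "diagonal H D"
  shows "diagonal (image_space H f) (f \<circ> D \<circ> f_inv)"
proof -
  obtain B where B: "orthonormal_basis H B" and eig: "\<forall>b\<in>B. eigenvector H D b"
    and D: "bounded_linear_op H H D" using assms unfolding diagonal_def by blast
  have "bounded_linear_op (image_space H f) (image_space H f) (f \<circ> D \<circ> f_inv)"
    using D by (auto simp: bounded_linear_op_def)
  moreover have "orthonormal_basis (image_space H f) (f ` B)"
    using B by (auto simp: orthonormal_basis_def subset_iff)
  moreover have "\<forall>b\<in>f ` B. eigenvector (image_space H f) (f \<circ> D \<circ> f_inv) b"
    using eig B D by (auto simp: eigenvector_def orthonormal_basis_def bounded_linear_op_def subset_iff)
  ultimately show ?thesis unfolding diagonal_def by blast
qed

lemma isometry_image_space: "isometry Y H V \<Longrightarrow> isometry Y (image_space H f) (f \<circ> V)"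
  by (auto simp: isometry_def bounded_linear_op_def intro!: exI[of _ 1])

lemma is_adjoint_image_space:
  "isometry Y H V \<Longrightarrow> is_adjoint Y H V W \<Longrightarrow> is_adjoint Y (image_space H f) (f \<circ> V) (W \<circ> f_inv)"
  by (auto simp: is_adjoint_def isometry_def bounded_linear_op_def)

lemma diagonal_dilation_image_space:
  assumes "diagonal_dilation Y U c H D V W"
  shows "diagonal_dilation Y U c (image_space H f) (f \<circ> D \<circ> f_inv) (f \<circ> V) (W \<circ> f_inv)"
proof -
  have "D x \<in> hvecs H" if "x \<in> hvecs H" for x
    using assms that by (auto simp: diagonal_dilation_def diagonal_def bounded_linear_op_def)
  moreover have "V y \<in> hvecs H" if "y \<in> hvecs Y" for y
    using assms that by (auto simp: diagonal_dilation_def isometry_def bounded_linear_op_def)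
  ultimately show ?thesis
    using assms hilbert_space_image_space separable_image_space diagonal_image_space isometry_image_space
      is_adjoint_image_space
    by (auto simp: diagonal_dilation_def)
qed

end

lemma diagonal_dilation_nat_complex:
  assumes "diagonal_dilation Y U c Z D V W"
  shows "\<exists>(X :: (nat \<Rightarrow> complex) hspace) D V W. diagonal_dilation Y U c X D V W"
proof -
  have Z: "inner_prod_space Z" "separable_hspace Z"
    using assms by (auto simp: diagonal_dilation_def hilbert_space_def inner_prod_space_iff)
  then obtain \<iota> :: "_ \<Rightarrow> nat \<Rightarrow> complex" where "inj_on \<iota> (hvecs Z)"
    using inner_prod_space.separable_inj_nat_complex by blast
  then interpret space_embedding Z \<iota>
    by (intro space_embedding.intro space_embedding_axioms.intro Z(1))
  show ?thesis using diagonal_dilation_image_space[OF assms] by blast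
qed

theorem proposition4p8:
  fixes Y :: "'y hspace" and U :: "'y \<Rightarrow> 'y" and \<epsilon> :: real
  assumes "hilbert_space Y" and "separable_hspace Y" and "infinite_dimensional Y"
    and "unitary Y U" and "\<epsilon> > 0"
  shows "\<exists>(X :: (nat \<Rightarrow> complex) hspace) (D :: (nat \<Rightarrow> complex) \<Rightarrow> (nat \<Rightarrow> complex))
            (V :: 'y \<Rightarrow> (nat \<Rightarrow> complex)) (Vadj :: (nat \<Rightarrow> complex) \<Rightarrow> 'y).
           hilbert_space X \<and> separable_hspace X \<and>
           diagonal X D \<and> (\<forall>x\<in>hvecs X. hnorm X (D x) \<le> (1 + \<epsilon>) * hnorm X x) \<and>
           isometry Y X V \<and> is_adjoint Y X V Vadj \<and>
           (\<forall>y\<in>hvecs Y. Vadj (D (V y)) = U y)"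
proof -
  obtain S where "isometric_operator Y U S"
    using assms(1,4) unitary_imp_isometric_operator unfolding hilbert_space_def by blast
  then interpret isometric_operator Y U S .
  obtain M :: nat where M: "2 \<le> M" "real M / (real M - 1) \<le> 1 + \<epsilon>"
    using ex_nat_div_pred_le[OF assms(5)] by blast
  have "diagonal_dilation Y U (1 + \<epsilon>) (power_space Y (Suc M))
      (dilation_diagonal (Suc M) M) (dilation (Suc M) M) (dilation_adjoint (Suc M) M)"
    using assms(1,2) M by (intro diagonal_dilation_power_space) auto
  from diagonal_dilation_nat_complex[OF this] show ?thesis
    unfolding diagonal_dilation_def .
qed

end
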